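(* Let $T:X\rightrightarrows X^*$ be a pseudomonotone operator with $\mathrm{dom}(T)$ convex. Then $(\widehat{T})^\rho_D=T^\rho_D$.
   Context: $X$ is a real Banach space with dual $X^*$ and pairing $\langle x,x^*\rangle=x^*(x)$. A multivalued operator $T:X\rightrightarrows X^*$ is identified with its graph $T\subset X\times X^*$; $T(x)=\{x^*:(x,x^* )\in T\}$, $\mathrm{dom}(T)=\{x:T(x)\ne\emptyset\}$, $Z_T=\{x:0\in T(x)\}$. For $A\subset X^*$, $\operatorname{cone}_\circ(A)=\{tv:t>0,v\in A\}$. For $C\subset X$, $N_C(x)=\{x^*: \langle y-x,x^*\rangle\le0\ \forall y\in C\}$. For $(x,x^* ),(y,y^* )\in X\times X^*$, write $(x,x^* )\sim_p(y,y^* )$ if either $\min\{\langle x-y,y^*\rangle,\langle y-x,x^*\rangle\}<0$ or $\langle x-y,y^*\rangle=\langle y-x,x^*\rangle=0$. The pseudomonotone polar is $T^\rho=\{(x,x^* ): (x,x^* )\sim_p(y,y^* )\ \forall (y,y^* )\in T\}$, and $T^\rho_D$ denotes its restriction to $\mathrm{dom}(T)$; likewise $(\widehat T)^\rho_D$ is the restriction of $(\widehat T)^\rho$ to $\mathrm{dom}(\widehat T)=\mathrm{dom}(T)$. $T$ is pseudomonotone if for all $(x,x^* ),(y,y^* )\in T$, $\langle y-x,x^*\rangle\ge0$ implies $\langle y-x,y^*\rangle\ge0$. For $x\in Z_T$, $L(T,x)=\{y\in X:\exists y^*\in T(y),\ \langle x-y,y^*\rangle\ge0\}$, and $\widehat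 T(x)=N_{L(T,x)}(x)$ if $x\in Z_T$, $\widehat T(x)=\operatorname{cone}_\circ(T(x))$ if $x\in\mathrm{dom}(T)\setminus Z_T$, $\widehat T(x)=\emptyset$ if $x\notin\mathrm{dom}(T)$. *)

theory Defs
  imports "HOL-Analysis.Analysis"
begin

text \<open>X is a real Banach space ('a::banach); its dual X* is the space of bounded
linear functionals blinfun to real. A multivalued operator is its graph,
a set of pairs. The pairing is blinfun_apply.\<close>

type_synonym 'a mop = "('a \<times> ('a \<Rightarrow>\<^sub>L real)) set"

definition op_val :: "'a mop \<Rightarrow> 'a \<Rightarrow> ('a \<Rightarrow>\<^sub>L real) set" where
  "op_val T x = {f. (x, f) \<in> T}"

definition op_dom :: "'a mop \<Rightarrow> 'a set" where
  "op_dom T = {x. op_val T x \<noteq> {}}"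

definition op_zeros :: "('a::real_normed_vector) mop \<Rightarrow> 'a set" where
  "op_zeros T = {x. 0 \<in> op_val T x}"

definition open_cone :: "('a::real_vector) set \<Rightarrow> 'a set" where
  "open_cone A = {t *\<^sub>R v | t v. t > 0 \<and> v \<in> A}"

definition dual_normal_cone :: "('a::real_normed_vector) set \<Rightarrow> 'a \<Rightarrow> ('a \<Rightarrow>\<^sub>L real) set" where
  "dual_normal_cone C x = {f. \<forall>y\<in>C. blinfun_apply f (y - x) \<le> 0}"

definition psim :: "('a::real_normed_vector) \<times> ('a \<Rightarrow>\<^sub>L real) \<Rightarrow> 'a \<times> ('a \<Rightarrow>\<^sub>L real) \<Rightarrow> bool" where
  "psim p q = (case p of (x, f) \<Rightarrow> case q of (y, g) \<Rightarrow>
      min (blinfun_apply g (x - y)) (blinfun_apply f (y - x)) < 0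
      \<or> (blinfun_apply g (x - y) = 0 \<and> blinfun_apply f (y - x) = 0))"

definition pm_polar :: "('a::real_normed_vector) mop \<Rightarrow> 'a mop" where
  "pm_polar T = {p. \<forall>q\<in>T. psim p q}"

definition polar_restr :: "('a::real_normed_vector) mop \<Rightarrow> 'a set \<Rightarrow> 'a mop" where
  "polar_restr S D = {(x, f). (x, f) \<in> pm_polar S \<and> x \<in> D}"

definition pseudomonotone_op :: "('a::real_normed_vector) mop \<Rightarrow> bool" where
  "pseudomonotone_op T = (\<forall>x f y g. (x, f) \<in> T \<longrightarrow> (y, g) \<in> T \<longrightarrow>
      blinfun_apply f (y - x) \<ge> 0 \<longrightarrow> blinfun_apply g (y - x) \<ge> 0)"

definition lev_set :: "('a::real_normed_vector) mop \<Rightarrow> 'a \<Rightarrow> 'a set" where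
  "lev_set T x = {y. \<exists>g\<in>op_val T y. blinfun_apply g (x - y) \<ge> 0}"

definition hat_op :: "('a::real_normed_vector) mop \<Rightarrow> 'a mop" where
  "hat_op T = {(x, f). (x \<in> op_zeros T \<and> f \<in> dual_normal_cone (lev_set T x) x)
      \<or> (x \<in> op_dom T - op_zeros T \<and> f \<in> open_cone (op_val T x))}"

end

theory Submission
  imports Defs
begin

text \<open>
  Pseudomonotonicity makes \<open>T\<close> a subset of \<open>T\<^sup>^\<close>, and polars are antitone, so the polar of
  \<open>T\<^sup>^\<close> lies in that of \<open>T\<close>. Conversely let \<open>(x, f) \<in> T\<^sup>\<rho>\<close> with \<open>x \<in> dom T\<close>. Outside the zeros
  of \<open>T\<close>, \<open>T\<^sup>^\<close> is the open cone over \<open>T\<close>, and \<open>\<sim>\<^sub>p\<close> is invariant under positive scaling.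
  At a zero \<open>y\<close>, comparing with \<open>(y, 0)\<close> gives \<open>f(y - x) \<le> 0\<close>; in the critical case
  \<open>f(y - x) = 0\<close> the midpoint \<open>z\<close> of \<open>x\<close> and \<open>y\<close> lies in \<open>dom T\<close> by convexity, every
  \<open>h \<in> T(z)\<close> satisfies \<open>h(x - z) \<le> 0\<close>, so \<open>z \<in> L(T, y)\<close> and any normal \<open>g\<close> to \<open>L(T, y)\<close>
  at \<open>y\<close> has \<open>g(x - y) = 2 g(z - y) \<le> 0\<close>.
\<close>

lemma psim_scaleR_right:
  assumes "t > 0"
  shows "psim p (y, t *\<^sub>R g) = psim p (y, g)"
proof -
  obtain x f where p: "p = (x, f)" by (cases p)
  have "\<And>a. t * a < 0 \<longleftrightarrow> a < 0" "\<And>a. t * a = 0 \<longleftrightarrow> a = 0"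
    using assms by (auto simp: mult_less_0_iff)
  then show ?thesis
    unfolding p psim_def min_less_iff_disj by (simp add: scaleR_blinfun.rep_eq)
qed

lemma pm_polar_antimono: "S \<subseteq> T \<Longrightarrow> pm_polar T \<subseteq> pm_polar S"
  by (auto simp: pm_polar_def)

lemma in_open_cone: "v \<in> A \<Longrightarrow> v \<in> open_cone A"
  unfolding open_cone_def by (auto intro!: exI[of _ 1])

lemma subset_hat_op:
  assumes "pseudomonotone_op T"
  shows "T \<subseteq> hat_op T"
proof
  fix p assume "p \<in> T"
  then obtain y g where p: "p = (y, g)" and yg: "(y, g) \<in> T" by (cases p) auto
  have "g \<in> dual_normal_cone (lev_set T y) y"
    unfolding dual_normal_cone_def
  proof (intro CollectI ballI)
    fix z assume "z \<in> lev_set T y"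
    then obtain h where "(z, h) \<in> T" "blinfun_apply h (y - z) \<ge> 0"
      by (auto simp: lev_set_def op_val_def)
    then have "blinfun_apply g (y - z) \<ge> 0"
      using assms yg unfolding pseudomonotone_op_def by blast
    then show "blinfun_apply g (z - y) \<le> 0"
      by (metis blinfun.minus_right minus_diff_eq neg_le_0_iff_le)
  qed
  moreover have "g \<in> open_cone (op_val T y)"
    using yg by (intro in_open_cone) (simp add: op_val_def)
  moreover have "y \<in> op_dom T"
    using yg by (auto simp: op_dom_def op_val_def)
  ultimately show "p \<in> hat_op T"
    by (auto simp: p hat_op_def)
qed

lemma op_dom_hat_op: "op_dom (hat_op T) = op_dom T"
proof
  show "op_dom (hat_op T) \<subseteq> op_dom T"
    by (auto simp: op_dom_def op_val_def hat_op_def op_zeros_def)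
  show "op_dom T \<subseteq> op_dom (hat_op T)"
  proof
    fix x assume x: "x \<in> op_dom T"
    then obtain g where g: "g \<in> op_val T x" by (auto simp: op_dom_def)
    have "0 \<in> dual_normal_cone (lev_set T x) x"
      by (simp add: dual_normal_cone_def)
    moreover have "g \<in> open_cone (op_val T x)"
      using g by (rule in_open_cone)
    ultimately have "(x, if x \<in> op_zeros T then 0 else g) \<in> hat_op T"
      using x by (simp add: hat_op_def)
    then show "x \<in> op_dom (hat_op T)"
      by (auto simp: op_dom_def op_val_def)
  qed
qed

lemma psim_open_cone:
  assumes "(x, f) \<in> pm_polar T" and "g \<in> open_cone (op_val T y)"
  shows "psim (x, f) (y, g)"
proof -
  obtain t v where "g = t *\<^sub>R v" "t > 0" "(y, v) \<in> T"
    using assms(2) by (auto simp: open_cone_def op_val_def)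
  with assms(1) show ?thesis
    by (simp add: psim_scaleR_right pm_polar_def)
qed

lemma midpoint_minus_left: "midpoint a b - a = (1/2) *\<^sub>R (b - a)"
  by (simp add: midpoint_def algebra_simps flip: scaleR_add_left)

lemma midpoint_minus_right: "midpoint a b - b = (1/2) *\<^sub>R (a - b)"
  using midpoint_minus_left midpoint_sym by metis

lemma psim_dual_normal_cone_lev_set:
  assumes xf: "(x, f) \<in> pm_polar T" and y: "y \<in> op_zeros T"
    and z: "midpoint x y \<in> op_dom T"
    and g: "g \<in> dual_normal_cone (lev_set T y) y"
  shows "psim (x, f) (y, g)"
proof -
  have "psim (x, f) (y, 0)"
    using xf y by (simp add: pm_polar_def op_zeros_def op_val_def)
  then have "blinfun_apply f (y - x) \<le> 0"
    by (auto simp: psim_def min_def split: if_splits)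
  moreover have "blinfun_apply g (x - y) \<le> 0" if f0: "blinfun_apply f (y - x) = 0"
  proof -
    define m where "m = midpoint x y"
    have m_x: "m - x = (1/2) *\<^sub>R (y - x)" and m_y: "m - y = (1/2) *\<^sub>R (x - y)"
      by (simp_all add: m_def midpoint_minus_left midpoint_minus_right)
    then have x_m: "x - m = (1/2) *\<^sub>R (x - y)" and y_m: "y - m = (1/2) *\<^sub>R (y - x)"
      by (metis minus_diff_eq scaleR_minus_right)+
    obtain h where h: "(m, h) \<in> T"
      using z by (auto simp: m_def op_dom_def op_val_def)
    have "psim (x, f) (m, h)"
      using xf h by (simp add: pm_polar_def)
    moreover have "blinfun_apply f (m - x) = 0"
      using f0 by (simp add: m_x blinfun.scaleR_right)
    ultimately have "blinfun_apply h (x - m) \<le> 0"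
      by (auto simp: psim_def min_def split: if_splits)
    then have "blinfun_apply h (y - m) \<ge> 0"
      by (simp add: x_m y_m blinfun.scaleR_right blinfun.diff_right)
    then have "m \<in> lev_set T y"
      using h by (auto simp: lev_set_def op_val_def)
    then have "blinfun_apply g (m - y) \<le> 0"
      using g by (auto simp: dual_normal_cone_def)
    then show ?thesis
      by (simp add: m_y blinfun.scaleR_right)
  qed
  ultimately show ?thesis
    by (cases "blinfun_apply f (y - x) < 0") (auto simp: psim_def min_def)
qed

lemma in_pm_polar_hat_op:
  assumes "convex (op_dom T)" and "(x, f) \<in> pm_polar T" and "x \<in> op_dom T"
  shows "(x, f) \<in> pm_polar (hat_op T)"
  unfolding pm_polar_def
proof (intro CollectI ballI)
  fix q assume "q \<in> hat_op T"
  then obtain y g where q: "q = (y, g)"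
    and "y \<in> op_zeros T \<and> g \<in> dual_normal_cone (lev_set T y) y
      \<or> g \<in> open_cone (op_val T y)"
    by (auto simp: hat_op_def)
  moreover have "midpoint x y \<in> op_dom T" if "y \<in> op_zeros T"
  proof -
    have "y \<in> op_dom T"
      using that by (auto simp: op_zeros_def op_dom_def)
    then show ?thesis
      using assms(1,3) closed_segment_subset midpoint_in_closed_segment by blast
  qed
  ultimately show "psim (x, f) q"
    using psim_dual_normal_cone_lev_set psim_open_cone assms(2) by blast
qed

theorem mainTheorem14:
  fixes T :: "('a::banach) mop"
  assumes "pseudomonotone_op T"
    and "convex (op_dom T)"
  shows "polar_restr (hat_op T) (op_dom (hat_op T)) = polar_restr T (op_dom T)"
proof -
  have "pm_polar (hat_op T) \<subseteq> pm_polar T"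
    using pm_polar_antimono subset_hat_op assms(1) by blast
  moreover have "(x, f) \<in> pm_polar (hat_op T)"
    if "(x, f) \<in> pm_polar T" "x \<in> op_dom T" for x f
    using in_pm_polar_hat_op assms(2) that .
  ultimately show ?thesis
    unfolding op_dom_hat_op polar_restr_def by auto
qed

end
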